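(* Let $\mu,\nu\in\mathbb{R}$ and $\sigma\in\mathbb{R}\setminus\{0\}$. On smooth functions $\Phi(x,t)$ on $\mathbb{R}^2$ define $$P=\partial_x,\quad H=\partial_t,\quad K=-\nu t\,\frac{e^{\sigma\partial_x}-1}{\sigma}-\mu x\,e^{-\sigma\partial_x}\partial_t,\quad D=-x\,\frac{1-e^{-\sigma\partial_x}}{\sigma}-t\partial_t,$$ $$C_1=(\mu x^2e^{-2\sigma\partial_x}+\nu t^2)\partial_t+2\nu xt\,\frac{1-e^{-\sigma\partial_x}}{\sigma}-\sigma\mu x\,e^{-2\sigma\partial_x}\partial_t,$$ $$C_2=-(\mu x^2e^{-\sigma\partial_x}+\nu t^2)\frac{e^{\sigma\partial_x}-1}{\sigma}-2\mu xt\,\partial_t-\sigma\mu(t\partial_t+t^2\partial_t^2),$$ where $e^{a\partial_x}$ is the shift $\Phi(x,t)\mapsto\Phi(x+a,t)$ and $x,t$ denote multiplication operators. Then these operators satisfy the relations $[K,H]=\nu\frac{e^{\sigma P}-1}{\sigma}$, $[K,P]=\mu e^{-\sigma P}H$, $[H,P]=0$, $[K,D]=0$, $[D,H]=H$, $[D,C_1]=-C_1$, $[H,C_1]=-2\nu D$, $[D,P]=\frac{1-e^{-\sigma P}}{\sigma}$, $[D,C_2]=-C_2-\sigma\mu D^2$, $[P,C_2]=2\mu D$, $[K,C_1]=\nu C_2+\sigma\mu\nu D^2$, $[K,C_2]=\mu C_1$, $[P,C_1]=-e^{-\sigma P}K-Ke^{-\sigma P}$, $[H,C_2]=2K+\sigma\mu(DH+HD)$,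 $[C_1,C_2]=-\sigma\mu(DC_1+C_1D)$. Moreover, with $$E_\sigma=\nu\Big(\frac{e^{\sigma\partial_x}-1}{\sigma}\Big)^2-\mu\,\partial_t^2,$$ one has $[E_\sigma,X]=0$ for $X\in\{K,P,H\}$, $[E_\sigma,D]=-2E_\sigma$, $[E_\sigma,C_1]=4\nu t\,E_\sigma$ and $[E_\sigma,C_2]=-4\mu(x+\sigma+\sigma t\partial_t)E_\sigma$. In particular each of these operators maps solutions of $E_\sigma\Phi=0$ to solutions. *)

theory Defs
  imports "HOL-Analysis.Analysis"
begin

type_synonym fn = "real \<times> real \<Rightarrow> real"
type_synonym op = "fn \<Rightarrow> fn"

definition Dx :: op where
  "Dx \<Phi> = (\<lambda>(x, t). deriv (\<lambda>y. \<Phi> (y, t)) x)"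
definition Dt :: op where
  "Dt \<Phi> = (\<lambda>(x, t). deriv (\<lambda>s. \<Phi> (x, s)) t)"

text \<open>Shift operator e^{a d/dx}: Phi(x,t) |-> Phi(x+a,t).\<close>
definition Sh :: "real \<Rightarrow> op" where
  "Sh a \<Phi> = (\<lambda>(x, t). \<Phi> (x + a, t))"

definition mul :: "(real \<times> real \<Rightarrow> real) \<Rightarrow> op" where
  "mul f \<Phi> = (\<lambda>p. f p * \<Phi> p)"
definition X :: op where "X = mul fst"
definition T :: op where "T = mul snd"

definition oadd :: "op \<Rightarrow> op \<Rightarrow> op" (infixl "\<oplus>" 65) where
  "A \<oplus> B = (\<lambda>\<Phi> p. A \<Phi> p + B \<Phi> p)"
definition osub :: "op \<Rightarrow> op \<Rightarrow> op" (infixl "\<ominus>" 65) where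
  "A \<ominus> B = (\<lambda>\<Phi> p. A \<Phi> p - B \<Phi> p)"
definition sc :: "real \<Rightarrow> op \<Rightarrow> op" where
  "sc c A = (\<lambda>\<Phi> p. c * A \<Phi> p)"
definition ocomp :: "op \<Rightarrow> op \<Rightarrow> op" (infixl "\<odot>" 70) where
  "A \<odot> B = (\<lambda>\<Phi>. A (B \<Phi>))"
definition comm :: "op \<Rightarrow> op \<Rightarrow> op" where
  "comm A B = A \<odot> B \<ominus> B \<odot> A"

definition pder :: "bool list \<Rightarrow> op" where
  "pder w = foldr (\<lambda>b A. (if b then Dx else Dt) \<odot> A) w id"
definition smooth2 :: "fn \<Rightarrow> bool" where
  "smooth2 \<Phi> \<longleftrightarrow> (\<forall>w p. pder w \<Phi> differentiable (at p))"

definition eq_sm :: "op \<Rightarrow> op \<Rightarrow> bool" (infix "\<doteq>" 50) where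
  "A \<doteq> B \<longleftrightarrow> (\<forall>\<Phi>. smooth2 \<Phi> \<longrightarrow> A \<Phi> = B \<Phi>)"

definition opP :: op where "opP = Dx"
definition opH :: op where "opH = Dt"
definition opK :: "real \<Rightarrow> real \<Rightarrow> real \<Rightarrow> op" where
  "opK \<mu> \<nu> \<sigma> = sc (- \<nu> / \<sigma>) (T \<odot> (Sh \<sigma> \<ominus> id)) \<ominus> sc \<mu> (X \<odot> Sh (- \<sigma>) \<odot> Dt)"
definition opD :: "real \<Rightarrow> op" where
  "opD \<sigma> = sc (- 1 / \<sigma>) (X \<odot> (id \<ominus> Sh (- \<sigma>))) \<ominus> T \<odot> Dt"
definition opC1 :: "real \<Rightarrow> real \<Rightarrow> real \<Rightarrow> op" where
  "opC1 \<mu> \<nu> \<sigma> =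
     (sc \<mu> (X \<odot> X \<odot> Sh (- 2 * \<sigma>)) \<oplus> sc \<nu> (T \<odot> T)) \<odot> Dt
     \<oplus> sc (2 * \<nu> / \<sigma>) (X \<odot> T \<odot> (id \<ominus> Sh (- \<sigma>)))
     \<ominus> sc (\<sigma> * \<mu>) (X \<odot> Sh (- 2 * \<sigma>) \<odot> Dt)"
definition opC2 :: "real \<Rightarrow> real \<Rightarrow> real \<Rightarrow> op" where
  "opC2 \<mu> \<nu> \<sigma> =
     sc (- 1 / \<sigma>) ((sc \<mu> (X \<odot> X \<odot> Sh (- \<sigma>)) \<oplus> sc \<nu> (T \<odot> T)) \<odot> (Sh \<sigma> \<ominus> id))
     \<ominus> sc (2 * \<mu>) (X \<odot> T \<odot> Dt)
     \<ominus> sc (\<sigma> * \<mu>) (T \<odot> Dt \<oplus> T \<odot> T \<odot> Dt \<odot> Dt)"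
definition opE :: "real \<Rightarrow> real \<Rightarrow> real \<Rightarrow> op" where
  "opE \<mu> \<nu> \<sigma> = sc (\<nu> / \<sigma>^2) ((Sh \<sigma> \<ominus> id) \<odot> (Sh \<sigma> \<ominus> id)) \<ominus> sc \<mu> (Dt \<odot> Dt)"

end

theory Submission
  imports Defs
begin

(* All operators are built from Dx, Dt, the shifts Sh a and the multiplications X and T, and smooth
   functions are closed under each of them. Applied to a smooth function and evaluated at a point,
   both sides of a relation can therefore be normalised with the Leibniz rule, the commutation of
   Dx and Dt with shifts, and the symmetry of mixed partial derivatives; what remains is an identity
   of rational expressions in sigma, mu, nu, x, t and the values of the function and its partial
   derivatives at the points (x + k sigma, t). Solutions of E Phi = 0 are preserved because
   E (A Phi) = [E, A] Phi + A (E Phi) and each [E, A] vanishes on such solutions. *)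

lemma pder_snoc: "pder (w @ [b]) F = pder w ((if b then Dx else Dt) F)"
  by (induction w) (auto simp: pder_def ocomp_def)

lemma smooth2_iff:
  "smooth2 F \<longleftrightarrow> (\<forall>p. F differentiable (at p)) \<and> smooth2 (Dx F) \<and> smooth2 (Dt F)"
proof
  assume "smooth2 F"
  moreover have "pder [] F = F"
    and "pder w (Dx F) = pder (w @ [True]) F" "pder w (Dt F) = pder (w @ [False]) F" for w
    by (simp_all only: pder_snoc if_True if_False) (simp add: pder_def)
  ultimately show "(\<forall>p. F differentiable (at p)) \<and> smooth2 (Dx F) \<and> smooth2 (Dt F)"
    unfolding smooth2_def by metis
next
  assume F: "(\<forall>p. F differentiable (at p)) \<and> smooth2 (Dx F) \<and> smooth2 (Dt F)"
  show "smooth2 F"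
    unfolding smooth2_def
  proof (intro allI)
    fix w p
    show "pder w F differentiable (at p)"
    proof (cases w rule: rev_exhaust)
      case Nil
      then show ?thesis using F by (cases p) (simp add: pder_def)
    next
      case (snoc v b)
      then show ?thesis
        using F unfolding smooth2_def by (cases b; cases p) (simp_all add: pder_snoc)
    qed
  qed
qed

lemma smooth2_coinduct:
  assumes "S F"
    and step: "\<And>G. S G \<Longrightarrow> (\<forall>p. G differentiable (at p)) \<and> S (Dx G) \<and> S (Dt G)"
  shows "smooth2 F"
proof -
  have "\<forall>G. S G \<longrightarrow> pder w G differentiable (at p)" for w p
  proof (induction w rule: rev_induct)
    case Nil
    show ?case
      using step by (simp only: pder_def foldr_Nil id_apply) blast
  next
    case (snoc b w)
    show ?case
    proof (intro allI impI)
      fix G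
      assume "S G"
      then have "S ((if b then Dx else Dt) G)"
        using step[OF \<open>S G\<close>] by simp
      then show "pder (w @ [b]) G differentiable (at p)"
        using snoc.IH by (simp add: pder_snoc)
    qed
  qed
  then show ?thesis using \<open>S F\<close> unfolding smooth2_def by blast
qed

lemma smooth2_differentiable: "smooth2 F \<Longrightarrow> F differentiable (at p)"
  and smooth2_Dx: "smooth2 F \<Longrightarrow> smooth2 (Dx F)"
  and smooth2_Dt: "smooth2 F \<Longrightarrow> smooth2 (Dt F)"
  using smooth2_iff by blast+

lemma has_real_derivative_Dx:
  assumes "F differentiable (at (x, t))"
  shows "((\<lambda>y. F (y, t)) has_real_derivative Dx F (x, t)) (at x)"
proof -
  have "(\<lambda>y. F (y, t)) differentiable (at x)"
    using differentiable_chain_at[of "\<lambda>y. (y, t)" x F] assms by (simp add: o_def)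
  then show ?thesis by (simp add: Dx_def DERIV_deriv_iff_real_differentiable)
qed

lemma has_real_derivative_Dt:
  assumes "F differentiable (at (x, t))"
  shows "((\<lambda>s. F (x, s)) has_real_derivative Dt F (x, t)) (at t)"
proof -
  have "(\<lambda>s. F (x, s)) differentiable (at t)"
    using differentiable_chain_at[of "\<lambda>s. (x, s)" t F] assms by (simp add: o_def)
  then show ?thesis by (simp add: Dt_def DERIV_deriv_iff_real_differentiable)
qed

lemma Dx_eqI:
  assumes "\<And>x t. ((\<lambda>y. F (y, t)) has_real_derivative G (x, t)) (at x)"
  shows "Dx F = G"
  using assms by (auto simp: Dx_def fun_eq_iff intro: DERIV_imp_deriv)

lemma Dt_eqI:
  assumes "\<And>x t. ((\<lambda>s. F (x, s)) has_real_derivative G (x, t)) (at t)"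
  shows "Dt F = G"
  using assms by (auto simp: Dt_def fun_eq_iff intro: DERIV_imp_deriv)

lemma Dx_affine: "Dx (\<lambda>p. a * fst p + b * snd p + c) = (\<lambda>p. a)"
  by (rule Dx_eqI) (auto intro!: derivative_eq_intros)

lemma Dt_affine: "Dt (\<lambda>p. a * fst p + b * snd p + c) = (\<lambda>p. b)"
  by (rule Dt_eqI) (auto intro!: derivative_eq_intros)

lemma Dx_const: "Dx (\<lambda>p. c) = (\<lambda>p. 0)"
  using Dx_affine[of 0 0 c] by simp

lemma Dt_const: "Dt (\<lambda>p. c) = (\<lambda>p. 0)"
  using Dt_affine[of 0 0 c] by simp

context
  fixes F G :: fn
  assumes F: "\<And>p. F differentiable (at p)" and G: "\<And>p. G differentiable (at p)"
begin

lemma Dx_add: "Dx (\<lambda>p. F p + G p) = (\<lambda>p. Dx F p + Dx G p)"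
  by (rule Dx_eqI, rule DERIV_add; rule has_real_derivative_Dx; rule F G)

lemma Dt_add: "Dt (\<lambda>p. F p + G p) = (\<lambda>p. Dt F p + Dt G p)"
  by (rule Dt_eqI, rule DERIV_add; rule has_real_derivative_Dt; rule F G)

lemma Dx_mult: "Dx (\<lambda>p. F p * G p) = (\<lambda>p. Dx F p * G p + Dx G p * F p)"
  by (rule Dx_eqI, rule DERIV_mult; rule has_real_derivative_Dx; rule F G)

lemma Dt_mult: "Dt (\<lambda>p. F p * G p) = (\<lambda>p. Dt F p * G p + Dt G p * F p)"
  by (rule Dt_eqI, rule DERIV_mult; rule has_real_derivative_Dt; rule F G)

lemma Dx_diff: "Dx (\<lambda>p. F p - G p) = (\<lambda>p. Dx F p - Dx G p)"
  by (rule Dx_eqI, rule DERIV_diff; rule has_real_derivative_Dx; rule F G)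

lemma Dt_diff: "Dt (\<lambda>p. F p - G p) = (\<lambda>p. Dt F p - Dt G p)"
  by (rule Dt_eqI, rule DERIV_diff; rule has_real_derivative_Dt; rule F G)

end

context
  fixes F :: fn
  assumes F: "\<And>p. F differentiable (at p)"
begin

lemma Dx_cmult: "Dx (\<lambda>p. c * F p) = (\<lambda>p. c * Dx F p)"
  by (rule Dx_eqI, rule DERIV_cmult, rule has_real_derivative_Dx, rule F)

lemma Dt_cmult: "Dt (\<lambda>p. c * F p) = (\<lambda>p. c * Dt F p)"
  by (rule Dt_eqI, rule DERIV_cmult, rule has_real_derivative_Dt, rule F)

lemma Dx_X: "Dx (X F) = (\<lambda>p. F p + X (Dx F) p)"
  unfolding X_def mul_def
  by (rule Dx_eqI) (auto intro!: derivative_eq_intros has_real_derivative_Dx F)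

lemma Dt_X: "Dt (X F) = X (Dt F)"
  unfolding X_def mul_def
  by (rule Dt_eqI) (auto intro!: derivative_eq_intros has_real_derivative_Dt F)

lemma Dx_T: "Dx (T F) = T (Dx F)"
  unfolding T_def mul_def
  by (rule Dx_eqI) (auto intro!: derivative_eq_intros has_real_derivative_Dx F)

lemma Dt_T: "Dt (T F) = (\<lambda>p. F p + T (Dt F) p)"
  unfolding T_def mul_def
  by (rule Dt_eqI) (auto intro!: derivative_eq_intros has_real_derivative_Dt F)

end

lemma Dx_Sh: "Dx (Sh a F) = Sh a (Dx F)"
proof -
  have "deriv (\<lambda>y. F (y + a, t)) x = deriv (\<lambda>y. F (y, t)) (x + a)" for x t
    using DERIV_shift[of "\<lambda>y. F (y, t)" _ x a] by (simp add: deriv_def)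
  then show ?thesis by (auto simp: Dx_def Sh_def fun_eq_iff)
qed

lemma Dt_Sh: "Dt (Sh a F) = Sh a (Dt F)"
  by (auto simp: Dt_def Sh_def fun_eq_iff)

lemma smooth2_affine: "smooth2 (\<lambda>p. a * fst p + b * snd p + c)"
proof (rule smooth2_coinduct[where S = "\<lambda>H. \<exists>a b c :: real. H = (\<lambda>p. a * fst p + b * snd p + c)"])
  fix H :: fn
  assume "\<exists>a b c :: real. H = (\<lambda>p. a * fst p + b * snd p + c)"
  then obtain a b c where H: "H = (\<lambda>p. a * fst p + b * snd p + c)"
    by blast
  have "H differentiable (at p)" for p
    unfolding H
    by (intro derivative_intros bounded_linear_imp_differentiable
        bounded_linear_fst bounded_linear_snd)
  moreover have "Dx H = (\<lambda>p. 0 * fst p + 0 * snd p + a)" "Dt H = (\<lambda>p. 0 * fst p + 0 * snd p + b)"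
    unfolding H Dx_affine Dt_affine by simp_all
  ultimately show "(\<forall>p. H differentiable (at p))
      \<and> (\<exists>a b c :: real. Dx H = (\<lambda>p. a * fst p + b * snd p + c))
      \<and> (\<exists>a b c :: real. Dt H = (\<lambda>p. a * fst p + b * snd p + c))"
    by blast
qed blast

(* Products of smooth functions are not closed under Dx and Dt, but by the Leibniz rule their
   finite sums are: this is the invariant for the coinduction. *)
inductive sum_of_smooth_products :: "fn \<Rightarrow> bool" where
  product: "smooth2 F \<Longrightarrow> smooth2 G \<Longrightarrow> sum_of_smooth_products (\<lambda>p. F p * G p)"
| add: "sum_of_smooth_products F \<Longrightarrow> sum_of_smooth_products G \<Longrightarrow>
    sum_of_smooth_products (\<lambda>p. F p + G p)"

lemma sum_of_smooth_products_Dx_Dt: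
  assumes "sum_of_smooth_products H"
  shows "(\<forall>p. H differentiable (at p))
    \<and> sum_of_smooth_products (Dx H) \<and> sum_of_smooth_products (Dt H)"
  using assms
proof induction
  case (product F G)
  then have "\<And>p. F differentiable (at p)" "\<And>p. G differentiable (at p)"
    by (simp_all add: smooth2_differentiable)
  with product show ?case
    by (simp add: Dx_mult Dt_mult differentiable_mult smooth2_Dx smooth2_Dt
        sum_of_smooth_products.product sum_of_smooth_products.add)
next
  case (add F G)
  then have F: "\<And>p. F differentiable (at p)" and G: "\<And>p. G differentiable (at p)"
    by blast+
  then show ?case
    using add.IH
    by (simp add: Dx_add[OF F G] Dt_add[OF F G] differentiable_add sum_of_smooth_products.add)
qed

lemma smooth2_sum_of_smooth_products: "sum_of_smooth_products H \<Longrightarrow> smooth2 H"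
  by (rule smooth2_coinduct[where S = sum_of_smooth_products])
    (simp_all add: sum_of_smooth_products_Dx_Dt)

lemma smooth2_mult: "smooth2 F \<Longrightarrow> smooth2 G \<Longrightarrow> smooth2 (\<lambda>p. F p * G p)"
  by (rule smooth2_sum_of_smooth_products, rule sum_of_smooth_products.product)

lemma smooth2_const: "smooth2 (\<lambda>p. c)"
  using smooth2_affine[of 0 0 c] by simp

lemma smooth2_cmult: "smooth2 F \<Longrightarrow> smooth2 (\<lambda>p. c * F p)"
  using smooth2_mult[OF smooth2_const] .

lemma smooth2_add:
  assumes "smooth2 F" "smooth2 G"
  shows "smooth2 (\<lambda>p. F p + G p)"
proof -
  have "sum_of_smooth_products (\<lambda>p. F p * 1 + G p * 1)"
    by (rule sum_of_smooth_products.add; rule sum_of_smooth_products.product)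
      (simp_all add: assms smooth2_const)
  then show ?thesis
    by (simp add: smooth2_sum_of_smooth_products)
qed

lemma smooth2_diff: "smooth2 F \<Longrightarrow> smooth2 G \<Longrightarrow> smooth2 (\<lambda>p. F p - G p)"
  using smooth2_add[OF _ smooth2_cmult, of F G "- 1"] by simp

lemma smooth2_X: "smooth2 F \<Longrightarrow> smooth2 (X F)"
  using smooth2_mult[OF smooth2_affine[of 1 0 0]] by (simp add: X_def mul_def)

lemma smooth2_T: "smooth2 F \<Longrightarrow> smooth2 (T F)"
  using smooth2_mult[OF smooth2_affine[of 0 1 0]] by (simp add: T_def mul_def)

lemma smooth2_Sh: "smooth2 F \<Longrightarrow> smooth2 (Sh a F)"
proof (rule smooth2_coinduct[where S = "\<lambda>H. \<exists>F. smooth2 F \<and> H = Sh a F"])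
  fix H
  assume "\<exists>F. smooth2 F \<and> H = Sh a F"
  then obtain F where F: "smooth2 F" and H: "H = Sh a F"
    by blast
  have "(F \<circ> (\<lambda>p. p + (a, 0))) differentiable (at p)" for p
    by (rule differentiable_chain_at) (auto intro!: derivative_intros smooth2_differentiable F)
  moreover have "H = F \<circ> (\<lambda>p. p + (a, 0))"
    by (auto simp: H Sh_def fun_eq_iff)
  ultimately have "H differentiable (at p)" for p
    by simp
  then show "(\<forall>p. H differentiable (at p))
      \<and> (\<exists>F. smooth2 F \<and> Dx H = Sh a F) \<and> (\<exists>F. smooth2 F \<and> Dt H = Sh a F)"
    using F by (auto simp: H Dx_Sh Dt_Sh intro: smooth2_Dx smooth2_Dt)
qed blast

lemma mixed_difference_Dt_Dx:
  fixes F :: fn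
  assumes F: "\<And>p. F differentiable (at p)" and DxF: "\<And>p. Dx F differentiable (at p)" and "h > 0"
  obtains \<xi> \<eta> where "a < \<xi>" "\<xi> < a + h" "b < \<eta>" "\<eta> < b + h"
    and "F (a + h, b + h) - F (a + h, b) - F (a, b + h) + F (a, b) = h\<^sup>2 * Dt (Dx F) (\<xi>, \<eta>)"
proof -
  obtain \<xi> where "a < \<xi>" "\<xi> < a + h"
    and "F (a + h, b + h) - F (a + h, b) - (F (a, b + h) - F (a, b))
      = h * (Dx F (\<xi>, b + h) - Dx F (\<xi>, b))"
    using MVT2[of a "a + h" "\<lambda>y. F (y, b + h) - F (y, b)" "\<lambda>y. Dx F (y, b + h) - Dx F (y, b)"]
      \<open>h > 0\<close> DERIV_diff[OF has_real_derivative_Dx has_real_derivative_Dx] F by auto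
  moreover obtain \<eta> where "b < \<eta>" "\<eta> < b + h"
    and "Dx F (\<xi>, b + h) - Dx F (\<xi>, b) = h * Dt (Dx F) (\<xi>, \<eta>)"
    using MVT2[of b "b + h" "\<lambda>s. Dx F (\<xi>, s)" "\<lambda>s. Dt (Dx F) (\<xi>, s)"] \<open>h > 0\<close>
      has_real_derivative_Dt DxF by auto
  ultimately show ?thesis
    by (intro that[of \<xi> \<eta>]) (simp_all add: power2_eq_square algebra_simps)
qed

lemma mixed_difference_Dx_Dt:
  fixes F :: fn
  assumes F: "\<And>p. F differentiable (at p)" and DtF: "\<And>p. Dt F differentiable (at p)" and "h > 0"
  obtains \<xi> \<eta> where "a < \<xi>" "\<xi> < a + h" "b < \<eta>" "\<eta> < b + h"
    and "F (a + h, b + h) - F (a + h, b) - F (a, b + h) + F (a, b) = h\<^sup>2 * Dx (Dt F) (\<xi>, \<eta>)"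
proof -
  obtain \<eta> where "b < \<eta>" "\<eta> < b + h"
    and "F (a + h, b + h) - F (a, b + h) - (F (a + h, b) - F (a, b))
      = h * (Dt F (a + h, \<eta>) - Dt F (a, \<eta>))"
    using MVT2[of b "b + h" "\<lambda>s. F (a + h, s) - F (a, s)" "\<lambda>s. Dt F (a + h, s) - Dt F (a, s)"]
      \<open>h > 0\<close> DERIV_diff[OF has_real_derivative_Dt has_real_derivative_Dt] F by auto
  moreover obtain \<xi> where "a < \<xi>" "\<xi> < a + h"
    and "Dt F (a + h, \<eta>) - Dt F (a, \<eta>) = h * Dx (Dt F) (\<xi>, \<eta>)"
    using MVT2[of a "a + h" "\<lambda>y. Dt F (y, \<eta>)" "\<lambda>y. Dx (Dt F) (y, \<eta>)"] \<open>h > 0\<close>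
      has_real_derivative_Dx DtF by auto
  ultimately show ?thesis
    by (intro that[of \<xi> \<eta>]) (simp_all add: power2_eq_square algebra_simps)
qed

lemma dist_Pair_lt_twice:
  fixes a b x y h :: real
  assumes "a < x" "x < a + h" "b < y" "y < b + h"
  shows "dist (x, y) (a, b) < 2 * h"
proof -
  have "dist (x, y) (a, b) \<le> \<bar>x - a\<bar> + \<bar>y - b\<bar>"
    using sqrt_sum_squares_le_sum_abs[of "x - a" "y - b"]
    by (simp add: dist_Pair_Pair dist_real_def)
  with assms show ?thesis by simp
qed

(* Schwarz's theorem: by the mean value theorem the same second difference equals h^2 times either
   mixed partial at points within distance 2 h of (a, b); continuity lets h go to 0. *)
theorem Dx_Dt_commute:
  fixes F :: fn
  assumes F: "\<And>p. F differentiable (at p)"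
    and DxF: "\<And>p. Dx F differentiable (at p)" and DtF: "\<And>p. Dt F differentiable (at p)"
    and cont_DxDt: "isCont (Dx (Dt F)) (a, b)" and cont_DtDx: "isCont (Dt (Dx F)) (a, b)"
  shows "Dx (Dt F) (a, b) = Dt (Dx F) (a, b)"
proof -
  have "\<bar>Dx (Dt F) (a, b) - Dt (Dx F) (a, b)\<bar> \<le> e" if "e > 0" for e
  proof -
    obtain \<delta>1 where "\<delta>1 > 0"
      and \<delta>1: "\<And>q. dist q (a, b) < \<delta>1 \<Longrightarrow> \<bar>Dx (Dt F) q - Dx (Dt F) (a, b)\<bar> < e / 2"
      using cont_DxDt \<open>e > 0\<close> unfolding continuous_at_eps_delta dist_real_def
      by (meson half_gt_zero)
    obtain \<delta>2 where "\<delta>2 > 0"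
      and \<delta>2: "\<And>q. dist q (a, b) < \<delta>2 \<Longrightarrow> \<bar>Dt (Dx F) q - Dt (Dx F) (a, b)\<bar> < e / 2"
      using cont_DtDx \<open>e > 0\<close> unfolding continuous_at_eps_delta dist_real_def
      by (meson half_gt_zero)
    define h where "h = min \<delta>1 \<delta>2 / 2"
    have "h > 0"
      using \<open>\<delta>1 > 0\<close> \<open>\<delta>2 > 0\<close> by (simp add: h_def)
    obtain \<xi> \<eta> where "a < \<xi>" "\<xi> < a + h" "b < \<eta>" "\<eta> < b + h"
      and A: "F (a + h, b + h) - F (a + h, b) - F (a, b + h) + F (a, b)
        = h\<^sup>2 * Dt (Dx F) (\<xi>, \<eta>)"
      using mixed_difference_Dt_Dx[OF F DxF \<open>h > 0\<close>] by blast
    then have "dist (\<xi>, \<eta>) (a, b) < \<delta>2"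
      using dist_Pair_lt_twice[where x = \<xi> and y = \<eta> and h = h] by (simp add: h_def)
    then have "\<bar>Dt (Dx F) (\<xi>, \<eta>) - Dt (Dx F) (a, b)\<bar> < e / 2"
      by (rule \<delta>2)
    obtain \<xi>' \<eta>' where "a < \<xi>'" "\<xi>' < a + h" "b < \<eta>'" "\<eta>' < b + h"
      and B: "F (a + h, b + h) - F (a + h, b) - F (a, b + h) + F (a, b)
        = h\<^sup>2 * Dx (Dt F) (\<xi>', \<eta>')"
      using mixed_difference_Dx_Dt[OF F DtF \<open>h > 0\<close>] by blast
    then have "dist (\<xi>', \<eta>') (a, b) < \<delta>1"
      using dist_Pair_lt_twice[where x = \<xi>' and y = \<eta>' and h = h] by (simp add: h_def)
    then have "\<bar>Dx (Dt F) (\<xi>', \<eta>') - Dx (Dt F) (a, b)\<bar> < e / 2"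
      by (rule \<delta>1)
    moreover have "Dt (Dx F) (\<xi>, \<eta>) = Dx (Dt F) (\<xi>', \<eta>')"
      using A B \<open>h > 0\<close> by simp
    ultimately show ?thesis
      using \<open>\<bar>Dt (Dx F) (\<xi>, \<eta>) - Dt (Dx F) (a, b)\<bar> < e / 2\<close> by linarith
  qed
  then show ?thesis
    using dense_eq0_I[of "Dx (Dt F) (a, b) - Dt (Dx F) (a, b)"] by simp
qed

lemma smooth2_Dx_Dt: "smooth2 F \<Longrightarrow> Dx (Dt F) = Dt (Dx F)"
  by (intro ext, clarify, rule Dx_Dt_commute)
    (simp_all add: smooth2_differentiable smooth2_Dx smooth2_Dt
      differentiable_imp_continuous_within)

lemma Sh_apply: "Sh a F p = F (fst p + a, snd p)"
  by (simp add: Sh_def split_def)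

lemma X_apply: "X F p = fst p * F p"
  by (simp add: X_def mul_def)

lemma T_apply: "T F p = snd p * F p"
  by (simp add: T_def mul_def)

lemmas operator_algebra_defs = oadd_def osub_def sc_def ocomp_def comm_def

lemmas symmetry_generator_defs = opP_def opH_def opK_def opD_def opC1_def opC2_def opE_def

lemmas smooth2_closed = smooth2_add smooth2_diff smooth2_cmult smooth2_X smooth2_T smooth2_Sh
  smooth2_Dx smooth2_Dt

lemmas smooth2_derivative_rules = Dx_add Dx_diff Dx_cmult Dx_X Dx_T Dx_Sh
  Dt_add Dt_diff Dt_cmult Dt_X Dt_T Dt_Sh smooth2_Dx_Dt

lemma comm_kernel_invariant:
  assumes "comm E A \<doteq> R" and "smooth2 \<Phi>" and "E \<Phi> = (\<lambda>p. 0)"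
    and "A (\<lambda>p. 0) = (\<lambda>p. 0)" and "R \<Phi> = (\<lambda>p. 0)"
  shows "E (A \<Phi>) = (\<lambda>p. 0)"
proof -
  have "E (A \<Phi>) = (\<lambda>p. comm E A \<Phi> p + A (E \<Phi>) p)"
    by (simp add: comm_def osub_def ocomp_def)
  with assms show ?thesis
    by (simp add: eq_sm_def)
qed

(* Some relations genuinely need sigma \<noteq> 0: for sigma = 0, where x / 0 = 0, D degenerates to - T Dt
   and comm K D no longer vanishes. *)
context
  fixes \<sigma> :: real
  assumes \<sigma>_nonzero: "\<sigma> \<noteq> 0"
begin

lemma commutation_relations:
  shows comm_opK_opH: "comm (opK \<mu> \<nu> \<sigma>) opH \<doteq> sc (\<nu> / \<sigma>) (Sh \<sigma> \<ominus> id)"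
    and comm_opK_opP: "comm (opK \<mu> \<nu> \<sigma>) opP \<doteq> sc \<mu> (Sh (- \<sigma>) \<odot> opH)"
    and comm_opH_opP: "comm opH opP \<doteq> (\<lambda>\<Phi> p. 0)"
    and comm_opK_opD: "comm (opK \<mu> \<nu> \<sigma>) (opD \<sigma>) \<doteq> (\<lambda>\<Phi> p. 0)"
    and comm_opD_opH: "comm (opD \<sigma>) opH \<doteq> opH"
    and comm_opD_opC1: "comm (opD \<sigma>) (opC1 \<mu> \<nu> \<sigma>) \<doteq> sc (- 1) (opC1 \<mu> \<nu> \<sigma>)"
    and comm_opH_opC1: "comm opH (opC1 \<mu> \<nu> \<sigma>) \<doteq> sc (- 2 * \<nu>) (opD \<sigma>)"
    and comm_opD_opP: "comm (opD \<sigma>) opP \<doteq> sc (1 / \<sigma>) (id \<ominus> Sh (- \<sigma>))"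
    and comm_opD_opC2:
      "comm (opD \<sigma>) (opC2 \<mu> \<nu> \<sigma>) \<doteq>
        sc (- 1) (opC2 \<mu> \<nu> \<sigma>) \<ominus> sc (\<sigma> * \<mu>) (opD \<sigma> \<odot> opD \<sigma>)"
    and comm_opP_opC2: "comm opP (opC2 \<mu> \<nu> \<sigma>) \<doteq> sc (2 * \<mu>) (opD \<sigma>)"
    and comm_opK_opC1:
      "comm (opK \<mu> \<nu> \<sigma>) (opC1 \<mu> \<nu> \<sigma>) \<doteq>
        sc \<nu> (opC2 \<mu> \<nu> \<sigma>) \<oplus> sc (\<sigma> * \<mu> * \<nu>) (opD \<sigma> \<odot> opD \<sigma>)"
    and comm_opK_opC2: "comm (opK \<mu> \<nu> \<sigma>) (opC2 \<mu> \<nu> \<sigma>) \<doteq> sc \<mu> (opC1 \<mu> \<nu> \<sigma>)"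
    and comm_opP_opC1:
      "comm opP (opC1 \<mu> \<nu> \<sigma>) \<doteq>
        sc (- 1) (Sh (- \<sigma>) \<odot> opK \<mu> \<nu> \<sigma> \<oplus> opK \<mu> \<nu> \<sigma> \<odot> Sh (- \<sigma>))"
    and comm_opH_opC2:
      "comm opH (opC2 \<mu> \<nu> \<sigma>) \<doteq>
        sc 2 (opK \<mu> \<nu> \<sigma>) \<oplus> sc (\<sigma> * \<mu>) (opD \<sigma> \<odot> opH \<oplus> opH \<odot> opD \<sigma>)"
    and comm_opC1_opC2:
      "comm (opC1 \<mu> \<nu> \<sigma>) (opC2 \<mu> \<nu> \<sigma>) \<doteq>
        sc (- \<sigma> * \<mu>) (opD \<sigma> \<odot> opC1 \<mu> \<nu> \<sigma> \<oplus> opC1 \<mu> \<nu> \<sigma> \<odot> opD \<sigma>)"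
  unfolding eq_sm_def operator_algebra_defs symmetry_generator_defs
  using \<sigma>_nonzero
  by (intro allI impI ext;
      simp only: id_apply smooth2_derivative_rules smooth2_closed smooth2_differentiable;
      simp add: Sh_apply X_apply T_apply field_simps; algebra)+

lemma opE_commutation_relations:
  shows comm_opE_opK: "comm (opE \<mu> \<nu> \<sigma>) (opK \<mu> \<nu> \<sigma>) \<doteq> (\<lambda>\<Phi> p. 0)"
    and comm_opE_opP: "comm (opE \<mu> \<nu> \<sigma>) opP \<doteq> (\<lambda>\<Phi> p. 0)"
    and comm_opE_opH: "comm (opE \<mu> \<nu> \<sigma>) opH \<doteq> (\<lambda>\<Phi> p. 0)"
    and comm_opE_opD: "comm (opE \<mu> \<nu> \<sigma>) (opD \<sigma>) \<doteq> sc (- 2) (opE \<mu> \<nu> \<sigma>)"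
    and comm_opE_opC1: "comm (opE \<mu> \<nu> \<sigma>) (opC1 \<mu> \<nu> \<sigma>) \<doteq> sc (4 * \<nu>) (T \<odot> opE \<mu> \<nu> \<sigma>)"
    and comm_opE_opC2:
      "comm (opE \<mu> \<nu> \<sigma>) (opC2 \<mu> \<nu> \<sigma>) \<doteq>
        sc (- 4 * \<mu>) ((X \<oplus> sc \<sigma> id \<oplus> sc \<sigma> (T \<odot> Dt)) \<odot> opE \<mu> \<nu> \<sigma>)"
  unfolding eq_sm_def operator_algebra_defs symmetry_generator_defs
  using \<sigma>_nonzero
  by (intro allI impI ext;
      simp only: id_apply smooth2_derivative_rules smooth2_closed smooth2_differentiable;
      simp add: Sh_apply X_apply T_apply field_simps; algebra)+

lemma opE_solutions_invariant:
  assumes "A \<in> {opK \<mu> \<nu> \<sigma>, opP, opH, opD \<sigma>, opC1 \<mu> \<nu> \<sigma>, opC2 \<mu> \<nu> \<sigma>}"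
    and "smooth2 \<Phi>" and "opE \<mu> \<nu> \<sigma> \<Phi> = (\<lambda>p. 0)"
  shows "opE \<mu> \<nu> \<sigma> (A \<Phi>) = (\<lambda>p. 0)"
  using assms(1)
proof (elim insertE emptyE)
  note invariant = comm_kernel_invariant[where E = "opE \<mu> \<nu> \<sigma>", OF _ assms(2,3)]
  note simps = opP_def opH_def opK_def opD_def opC1_def opC2_def operator_algebra_defs
    Sh_apply X_apply T_apply Dx_const Dt_const assms(3)
  show "opE \<mu> \<nu> \<sigma> (A \<Phi>) = (\<lambda>p. 0)" if "A = opK \<mu> \<nu> \<sigma>"
    unfolding that by (rule invariant[OF comm_opE_opK]) (simp_all add: simps)
  show "opE \<mu> \<nu> \<sigma> (A \<Phi>) = (\<lambda>p. 0)" if "A = opP"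
    unfolding that by (rule invariant[OF comm_opE_opP]) (simp_all add: simps)
  show "opE \<mu> \<nu> \<sigma> (A \<Phi>) = (\<lambda>p. 0)" if "A = opH"
    unfolding that by (rule invariant[OF comm_opE_opH]) (simp_all add: simps)
  show "opE \<mu> \<nu> \<sigma> (A \<Phi>) = (\<lambda>p. 0)" if "A = opD \<sigma>"
    unfolding that by (rule invariant[OF comm_opE_opD]) (simp_all add: simps)
  show "opE \<mu> \<nu> \<sigma> (A \<Phi>) = (\<lambda>p. 0)" if "A = opC1 \<mu> \<nu> \<sigma>"
    unfolding that by (rule invariant[OF comm_opE_opC1]) (simp_all add: simps)
  show "opE \<mu> \<nu> \<sigma> (A \<Phi>) = (\<lambda>p. 0)" if "A = opC2 \<mu> \<nu> \<sigma>"
    unfolding that by (rule invariant[OF comm_opE_opC2]) (simp_all add: simps)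
qed

end

theorem mainTheorem5:
  fixes \<mu> \<nu> \<sigma> :: real
  assumes "\<sigma> \<noteq> 0"
  defines "P \<equiv> opP" and "H \<equiv> opH" and "K \<equiv> opK \<mu> \<nu> \<sigma>" and "D \<equiv> opD \<sigma>"
      and "C1 \<equiv> opC1 \<mu> \<nu> \<sigma>" and "C2 \<equiv> opC2 \<mu> \<nu> \<sigma>" and "E \<equiv> opE \<mu> \<nu> \<sigma>"
  shows
    "(comm K H \<doteq> sc (\<nu> / \<sigma>) (Sh \<sigma> \<ominus> id)) \<and>
     (comm K P \<doteq> sc \<mu> (Sh (- \<sigma>) \<odot> H)) \<and>
     (comm H P \<doteq> (\<lambda>\<Phi> p. 0)) \<and>
     (comm K D \<doteq> (\<lambda>\<Phi> p. 0)) \<and>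
     (comm D H \<doteq> H) \<and>
     (comm D C1 \<doteq> sc (- 1) C1) \<and>
     (comm H C1 \<doteq> sc (- 2 * \<nu>) D) \<and>
     (comm D P \<doteq> sc (1 / \<sigma>) (id \<ominus> Sh (- \<sigma>))) \<and>
     (comm D C2 \<doteq> sc (- 1) C2 \<ominus> sc (\<sigma> * \<mu>) (D \<odot> D)) \<and>
     (comm P C2 \<doteq> sc (2 * \<mu>) D) \<and>
     (comm K C1 \<doteq> sc \<nu> C2 \<oplus> sc (\<sigma> * \<mu> * \<nu>) (D \<odot> D)) \<and>
     (comm K C2 \<doteq> sc \<mu> C1) \<and>
     (comm P C1 \<doteq> sc (- 1) (Sh (- \<sigma>) \<odot> K \<oplus> K \<odot> Sh (- \<sigma>))) \<and>
     (comm H C2 \<doteq> sc 2 K \<oplus> sc (\<sigma> * \<mu>) (D \<odot> H \<oplus> H \<odot> D)) \<and>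
     (comm C1 C2 \<doteq> sc (- \<sigma> * \<mu>) (D \<odot> C1 \<oplus> C1 \<odot> D)) \<and>
     (comm E K \<doteq> (\<lambda>\<Phi> p. 0)) \<and>
     (comm E P \<doteq> (\<lambda>\<Phi> p. 0)) \<and>
     (comm E H \<doteq> (\<lambda>\<Phi> p. 0)) \<and>
     (comm E D \<doteq> sc (- 2) E) \<and>
     (comm E C1 \<doteq> sc (4 * \<nu>) (T \<odot> E)) \<and>
     (comm E C2 \<doteq> sc (- 4 * \<mu>) ((X \<oplus> sc \<sigma> id \<oplus> sc \<sigma> (T \<odot> Dt)) \<odot> E)) \<and>
     (\<forall>A \<in> {K, P, H, D, C1, C2}. \<forall>\<Phi>. smooth2 \<Phi> \<and> E \<Phi> = (\<lambda>p. 0) \<longrightarrow> E (A \<Phi>) = (\<lambda>p. 0))"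
  unfolding P_def H_def K_def D_def C1_def C2_def E_def
  by (intro conjI ballI allI impI commutation_relations[OF assms(1)]
      opE_commutation_relations[OF assms(1)])
    (auto intro: opE_solutions_invariant[OF assms(1)])

end
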